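(* Let $p$ be a prime and $M=\mathbb Z_{p^2}^2$, so $\mathrm{GL}(M)=\mathrm{GL}(2,\mathbb Z_{p^2})$. (i) Let $f=X-a$, $a\in\mathbb Z_p^\times$. Every element of $\mathrm{GL}(M)_f^{(1,1)}$ is conjugate in $\mathrm{GL}(2,\mathbb Z_{p^2})$ to exactly one of the following, where $b$ is an integer with $0<b<p$, $b\equiv a\pmod p$: (i.1) $bI+p\begin{bmatrix}\alpha&0\\0&\delta\end{bmatrix}$ with integers $0\le\alpha\le\delta<p$; (i.2) $bI+p\begin{bmatrix}\alpha&1\\0&\alpha\end{bmatrix}$ with $\alpha\in\mathbb Z_p$; (i.3) $bI+p\begin{bmatrix}0&1\\-b_0&-b_1\end{bmatrix}$ with $X^2+b_1X+b_0\in\mathbb Z_p[X]$ irreducible. (ii) Let $f=X-a$, $a\in\mathbb Z_p^\times$. Every element of $\mathrm{GL}(M)_f^{(2)}$ is conjugate in $\mathrm{GL}(2,\mathbb Z_{p^2})$ to exactly one matrix $\begin{bmatrix}b&1\\0&b\end{bmatrix}+p\begin{bmatrix}\alpha&0\\ \gamma&0\end{bmatrix}$, with $b$ an integer, $0<b<p$, $b\equiv a\pmod p$, and $\alpha,\gamma\in\mathbb Z_p$. (iii) Let $f=X^2+a_1X+a_0\in\mathbb Z_p[X]$ be irreducible. Every element of $\mathrm{GL}(M)_f$ is conjugate in $\mathrm{GL}(2,\mathbb Z_{p^2})$ to exactly one matrix $\begin{bmatrix}0&1\\-b_0&-b_1\end{bmatrix}+p\begin{bmatrix}\alpha&\beta\\0&0\end{bmatrix}$,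 where $b_0,b_1$ are the integers with $0\le b_0,b_1<p$, $b_0\equiv a_0$, $b_1\equiv a_1\pmod p$, and $\alpha,\beta\in\mathbb Z_p$.
   Context: $\mathbb Z_m=\mathbb Z/m\mathbb Z$. For $x=c+p\mathbb Z\in\mathbb Z_p$, $px$ denotes the element $pc+p^2\mathbb Z$ of $\mathbb Z_{p^2}$; integers are regarded as elements of $\mathbb Z_{p^2}$ by reduction. For $A\in\mathrm{GL}(2,\mathbb Z_{p^2})$, $\overline A\in\mathrm{GL}(2,\mathbb Z_p)$ is its entrywise reduction mod $p$. For monic irreducible $f\in\mathbb Z_p[X]$, $f\neq X$: $\mathrm{GL}(M)_f$ is the set of $A$ such that the minimal polynomial of $\overline A$ is a power of $f$. For $f=X-a$: $\mathrm{GL}(M)_f^{(1,1)}$ is the set of $A$ such that $\overline A$ has elementary divisors $f,f$ (i.e. $\overline A=aI$), and $\mathrm{GL}(M)_f^{(2)}$ is the set of $A$ such that $\overline A$ has the single elementary divisor $f^2$. Conjugacy classes correspond to isomorphism classes of $\Lambda$-modules ($\Lambda=\mathbb Z[t,t^{-1}]$) with underlying group $\mathbb Z_{p^2}^2$ and $t$ acting by the matrix. *)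

theory Defs
  imports "HOL-Computational_Algebra.Polynomial" "HOL-Number_Theory.Cong"
begin

text \<open>2x2 matrices over Z/mZ, represented by integer quadruples (a,b,c,d) standing for
  the matrix [[a,b],[c,d]]; canonical representatives have entries in {0..<m}.\<close>

type_synonym mat2 = "int \<times> int \<times> int \<times> int"

definition mred :: "int \<Rightarrow> mat2 \<Rightarrow> mat2" where
  "mred m A = (case A of (a,b,c,d) \<Rightarrow> (a mod m, b mod m, c mod m, d mod m))"

definition mI :: mat2 where "mI = (1,0,0,1)"

definition mzero :: mat2 where "mzero = (0,0,0,0)"

definition madd :: "mat2 \<Rightarrow> mat2 \<Rightarrow> mat2" where
  "madd A B = (case A of (a,b,c,d) \<Rightarrow> case B of (a',b',c',d') \<Rightarrow> (a+a', b+b', c+c', d+d'))"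

definition msmul :: "int \<Rightarrow> mat2 \<Rightarrow> mat2" where
  "msmul s A = (case A of (a,b,c,d) \<Rightarrow> (s*a, s*b, s*c, s*d))"

definition mmul :: "int \<Rightarrow> mat2 \<Rightarrow> mat2 \<Rightarrow> mat2" where
  "mmul m A B = mred m (case A of (a,b,c,d) \<Rightarrow> case B of (a',b',c',d') \<Rightarrow>
     (a*a' + b*c', a*b' + b*d', c*a' + d*c', c*b' + d*d'))"

definition mdet :: "mat2 \<Rightarrow> int" where
  "mdet A = (case A of (a,b,c,d) \<Rightarrow> a*d - b*c)"

definition GL2 :: "int \<Rightarrow> mat2 set" where
  "GL2 m = {A. mred m A = A \<and> coprime (mdet A) m}"

definition conj2 :: "int \<Rightarrow> mat2 \<Rightarrow> mat2 \<Rightarrow> bool" where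
  "conj2 m A B \<longleftrightarrow> (\<exists>P\<in>GL2 m. \<exists>Q\<in>GL2 m.
      mmul m P Q = mred m mI \<and> mmul m Q P = mred m mI \<and> B = mmul m (mmul m P A) Q)"

definition peval :: "int \<Rightarrow> int poly \<Rightarrow> mat2 \<Rightarrow> mat2" where
  "peval m q A = foldr (\<lambda>c acc. mred m (madd (msmul c mI) (mmul m acc A))) (coeffs q) (mred m mzero)"

definition preduce :: "int \<Rightarrow> int poly \<Rightarrow> int poly" where
  "preduce p q = map_poly (\<lambda>c. c mod p) q"

definition minpoly_mod :: "int \<Rightarrow> mat2 \<Rightarrow> int poly \<Rightarrow> bool" where
  "minpoly_mod p A q \<longleftrightarrow> lead_coeff q = 1 \<and> preduce p q = q \<and> peval p q A = mred p mzero \<and>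
     (\<forall>q'. lead_coeff q' = 1 \<longrightarrow> peval p q' A = mred p mzero \<longrightarrow> degree q \<le> degree q')"

definition irreducible_mod :: "int \<Rightarrow> int poly \<Rightarrow> bool" where
  "irreducible_mod p f \<longleftrightarrow> degree (preduce p f) \<ge> 1 \<and>
     (\<forall>g h. preduce p f = preduce p (g * h) \<longrightarrow>
        degree (preduce p g) = 0 \<or> degree (preduce p h) = 0)"

definition GLf :: "int \<Rightarrow> int poly \<Rightarrow> mat2 set" where
  "GLf p f = {A \<in> GL2 (p^2). \<exists>k q. minpoly_mod p (mred p A) q \<and> q = preduce p (f ^ k)}"

text \<open>GL(M)_f^(1,1) for f = X - a: A mod p = aI.\<close>
definition GL11 :: "int \<Rightarrow> int \<Rightarrow> mat2 set" where
  "GL11 p a = {A \<in> GL2 (p^2). mred p A = mred p (msmul a mI)}"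

text \<open>GL(M)_f^(2) for f = X - a: A mod p has single elementary divisor (X-a)^2,
  i.e. (for a 2x2 matrix) its minimal polynomial is (X-a)^2.\<close>
definition GLtwo :: "int \<Rightarrow> int \<Rightarrow> mat2 set" where
  "GLtwo p a = {A \<in> GL2 (p^2). minpoly_mod p (mred p A) (preduce p ([:-a, 1:] ^ 2))}"

definition NF1 :: "int \<Rightarrow> int \<Rightarrow> mat2 set" where
  "NF1 p a =
     {N. \<exists>b \<alpha> \<delta>. 0 < b \<and> b < p \<and> [b = a] (mod p) \<and> 0 \<le> \<alpha> \<and> \<alpha> \<le> \<delta> \<and> \<delta> < p \<and>
          N = mred (p^2) (b + p*\<alpha>, 0, 0, b + p*\<delta>)}
   \<union> {N. \<exists>b \<alpha>. 0 < b \<and> b < p \<and> [b = a] (mod p) \<and> 0 \<le> \<alpha> \<and> \<alpha> < p \<and>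
          N = mred (p^2) (b + p*\<alpha>, p, 0, b + p*\<alpha>)}
   \<union> {N. \<exists>b b0 b1. 0 < b \<and> b < p \<and> [b = a] (mod p) \<and> 0 \<le> b0 \<and> b0 < p \<and> 0 \<le> b1 \<and> b1 < p \<and>
          irreducible_mod p [:b0, b1, 1:] \<and>
          N = mred (p^2) (b, p, - p*b0, b - p*b1)}"

definition NF2 :: "int \<Rightarrow> int \<Rightarrow> mat2 set" where
  "NF2 p a =
     {N. \<exists>b \<alpha> \<gamma>. 0 < b \<and> b < p \<and> [b = a] (mod p) \<and> 0 \<le> \<alpha> \<and> \<alpha> < p \<and> 0 \<le> \<gamma> \<and> \<gamma> < p \<and>
          N = mred (p^2) (b + p*\<alpha>, 1, p*\<gamma>, b)}"

definition NF3 :: "int \<Rightarrow> int \<Rightarrow> int \<Rightarrow> mat2 set" where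
  "NF3 p a0 a1 =
     {N. \<exists>b0 b1 \<alpha> \<beta>. 0 \<le> b0 \<and> b0 < p \<and> 0 \<le> b1 \<and> b1 < p \<and> [b0 = a0] (mod p) \<and> [b1 = a1] (mod p) \<and>
          0 \<le> \<alpha> \<and> \<alpha> < p \<and> 0 \<le> \<beta> \<and> \<beta> < p \<and>
          N = mred (p^2) (p*\<alpha>, 1 + p*\<beta>, - b0, - b1)}"

end

theory Submission imports Defs begin

(* Two facts drive everything:
   (1) A matrix that is not scalar mod p is similar mod p^k to the companion matrix of its
       characteristic polynomial, so such matrices are classified mod p^k by trace and determinant.
       This handles parts (ii) and (iii), where A mod p is not scalar.
   (2) If A = bI + pC (part (i)), then similarity of bI + pC and bI + pD mod p^2 is the same as
       similarity of C and D mod p; so part (i) reduces to the rational canonical forms of 2x2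
       matrices over Z_p (diagonal, a Jordan block, or a companion matrix of an irreducible
       quadratic), which we establish by hand. *)

section \<open>Integer 2x2 matrices, congruence and similarity\<close>

definition imul :: "mat2 \<Rightarrow> mat2 \<Rightarrow> mat2" where
  "imul A B = (case A of (a,b,c,d) \<Rightarrow> case B of (a',b',c',d') \<Rightarrow>
     (a*a' + b*c', a*b' + b*d', c*a' + d*c', c*b' + d*d'))"

definition mtr :: "mat2 \<Rightarrow> int" where
  "mtr A = (case A of (a,b,c,d) \<Rightarrow> a + d)"

definition madj :: "mat2 \<Rightarrow> mat2" where
  "madj A = (case A of (a,b,c,d) \<Rightarrow> (d,-b,-c,a))"

definition mcong :: "int \<Rightarrow> mat2 \<Rightarrow> mat2 \<Rightarrow> bool" where
  "mcong m A B \<longleftrightarrow> mred m A = mred m B"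

text \<open>Similarity mod m: conjugacy by a matrix whose determinant is a unit mod m, with the
  inverse eliminated (P A = B P instead of B = P A P^-1).\<close>

definition msim :: "int \<Rightarrow> mat2 \<Rightarrow> mat2 \<Rightarrow> bool" where
  "msim m A B \<longleftrightarrow> (\<exists>P. coprime (mdet P) m \<and> mcong m (imul P A) (imul B P))"

lemma mmul_eq: "mmul m A B = mred m (imul A B)"
  by (cases A; cases B) (simp add: mmul_def imul_def)

lemma mcong_iff:
  "mcong m (a,b,c,d) (a',b',c',d') \<longleftrightarrow>
     [a = a'] (mod m) \<and> [b = b'] (mod m) \<and> [c = c'] (mod m) \<and> [d = d'] (mod m)"
  by (simp add: mcong_def mred_def cong_def)

lemma mcong_refl [simp]: "mcong m A A"
  by (simp add: mcong_def)

lemma mcong_sym: "mcong m A B \<Longrightarrow> mcong m B A"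
  by (simp add: mcong_def)

lemma mcong_trans [trans]: "mcong m A B \<Longrightarrow> mcong m B C \<Longrightarrow> mcong m A C"
  by (simp add: mcong_def)

lemma mred_mred [simp]: "mred m (mred m A) = mred m A"
  by (cases A) (simp add: mred_def)

lemma mcong_mred [simp]: "mcong m (mred m A) B \<longleftrightarrow> mcong m A B" "mcong m A (mred m B) \<longleftrightarrow> mcong m A B"
  by (simp_all add: mcong_def)

lemma mcong_imul: "mcong m A A' \<Longrightarrow> mcong m B B' \<Longrightarrow> mcong m (imul A B) (imul A' B')"
  by (cases A; cases A'; cases B; cases B') (auto simp: mcong_iff imul_def intro!: cong_add cong_mult)

lemma mcong_madd: "mcong m A A' \<Longrightarrow> mcong m B B' \<Longrightarrow> mcong m (madd A B) (madd A' B')"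
  by (cases A; cases A'; cases B; cases B') (auto simp: mcong_iff madd_def intro!: cong_add)

lemma mcong_msmul: "[s = s'] (mod m) \<Longrightarrow> mcong m A A' \<Longrightarrow> mcong m (msmul s A) (msmul s' A')"
  by (cases A; cases A') (auto simp: mcong_iff msmul_def intro!: cong_mult)

lemma mcong_mdet: "mcong m A B \<Longrightarrow> [mdet A = mdet B] (mod m)"
  by (cases A; cases B) (auto simp: mcong_iff mdet_def intro!: cong_diff cong_mult)

lemma mcong_mtr: "mcong m A B \<Longrightarrow> [mtr A = mtr B] (mod m)"
  by (cases A; cases B) (auto simp: mcong_iff mtr_def intro!: cong_add)

lemma mred_imul [simp]:
  "mred m (imul (mred m A) B) = mred m (imul A B)" "mred m (imul A (mred m B)) = mred m (imul A B)"
  using mcong_imul[of m "mred m A" A B B] mcong_imul[of m A A "mred m B" B] by (simp_all add: mcong_def)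

lemma mred_madd [simp]:
  "mred m (madd (mred m A) B) = mred m (madd A B)" "mred m (madd A (mred m B)) = mred m (madd A B)"
  using mcong_madd[of m "mred m A" A B B] mcong_madd[of m A A "mred m B" B] by (simp_all add: mcong_def)

lemma mcong_cancel:
  assumes "coprime u m" "mcong m (msmul u A) (msmul u B)"
  shows "mcong m A B"
  using assms by (cases A; cases B) (simp add: mcong_iff msmul_def cong_mult_lcancel)

lemma mcong_madd_cancel: "mcong m (madd X Y) (madd X Z) \<longleftrightarrow> mcong m Y Z"
  by (cases X; cases Y; cases Z) (simp add: mcong_iff madd_def cong_add_lcancel)

lemma imul_assoc: "imul (imul A B) C = imul A (imul B C)"
  by (cases A; cases B; cases C) (simp add: imul_def algebra_simps)

lemma mdet_imul: "mdet (imul A B) = mdet A * mdet B"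
  by (cases A; cases B) (simp add: imul_def mdet_def algebra_simps)

lemma mtr_imul_comm: "mtr (imul A B) = mtr (imul B A)"
  by (cases A; cases B) (simp add: imul_def mtr_def algebra_simps)

lemma madj_left: "imul (madj P) P = msmul (mdet P) mI"
  by (cases P) (simp add: imul_def madj_def mdet_def msmul_def mI_def algebra_simps)

lemma madj_right: "imul P (madj P) = msmul (mdet P) mI"
  by (cases P) (simp add: imul_def madj_def mdet_def msmul_def mI_def algebra_simps)

lemma mdet_madj [simp]: "mdet (madj P) = mdet P"
  by (cases P) (simp add: madj_def mdet_def algebra_simps)

lemma imul_msmul [simp]: "imul (msmul s A) B = msmul s (imul A B)" "imul A (msmul s B) = msmul s (imul A B)"
  by (cases A; cases B; simp add: imul_def msmul_def algebra_simps)+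

lemma imul_mI [simp]: "imul mI A = A" "imul A mI = A"
  by (cases A; simp add: imul_def mI_def)+

lemma imul_madd [simp]: "imul (madd X Y) Z = madd (imul X Z) (imul Y Z)"
  by (cases X; cases Y; cases Z) (simp add: imul_def madd_def algebra_simps)

lemma imul_mzero [simp]: "imul mzero A = mzero"
  by (cases A) (simp add: imul_def mzero_def)

lemma madd_mzero [simp]: "madd A mzero = A"
  by (cases A) (simp add: madd_def mzero_def)

lemma msmul_msmul [simp]: "msmul s (msmul t A) = msmul (s*t) A"
  by (cases A; simp add: msmul_def algebra_simps)

lemma msmul_1 [simp]: "msmul 1 A = A"
  by (cases A) (simp add: msmul_def)

lemma mdet_msmul [simp]: "mdet (msmul s A) = s*s * mdet A"
  by (cases A; simp add: msmul_def mdet_def algebra_simps)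

lemma madj_conj: "imul (madj P) (imul P X) = msmul (mdet P) X"
  by (simp add: imul_assoc[symmetric] madj_left)

lemma msim_refl: "msim m A A"
proof -
  have "mdet mI = 1" by (simp add: mdet_def mI_def)
  then show ?thesis unfolding msim_def by (intro exI[of _ mI]) simp
qed

lemma msim_sym:
  assumes "msim m A B"
  shows "msim m B A"
proof -
  obtain P where cp: "coprime (mdet P) m" and h: "mcong m (imul P A) (imul B P)"
    using assms unfolding msim_def by blast
  have "mcong m (imul (madj P) (imul (imul P A) (madj P))) (imul (madj P) (imul (imul B P) (madj P)))"
    by (rule mcong_imul[OF mcong_refl mcong_imul[OF h mcong_refl]])
  moreover have "imul (madj P) (imul (imul P A) (madj P)) = msmul (mdet P) (imul A (madj P))"
    by (cases P; cases A) (simp add: imul_def madj_def mdet_def msmul_def algebra_simps)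
  moreover have "imul (madj P) (imul (imul B P) (madj P)) = msmul (mdet P) (imul (madj P) B)"
    by (cases P; cases B) (simp add: imul_def madj_def mdet_def msmul_def algebra_simps)
  ultimately have "mcong m (imul A (madj P)) (imul (madj P) B)"
    using mcong_cancel[OF cp] by simp
  then show ?thesis
    unfolding msim_def using cp by (intro exI[of _ "madj P"]) (simp add: mcong_sym)
qed

lemma msim_trans:
  assumes "msim m A B" "msim m B C"
  shows "msim m A C"
proof -
  obtain P where cp: "coprime (mdet P) m" and h: "mcong m (imul P A) (imul B P)"
    using assms unfolding msim_def by blast
  obtain Q where cq: "coprime (mdet Q) m" and h2: "mcong m (imul Q B) (imul C Q)"
    using assms unfolding msim_def by blast
  have "imul (imul Q P) A = imul Q (imul P A)" by (simp add: imul_assoc)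
  also have "mcong m \<dots> (imul Q (imul B P))" by (rule mcong_imul[OF mcong_refl h])
  also have "imul Q (imul B P) = imul (imul Q B) P" by (simp add: imul_assoc)
  also have "mcong m \<dots> (imul (imul C Q) P)" by (rule mcong_imul[OF h2 mcong_refl])
  also have "imul (imul C Q) P = imul C (imul Q P)" by (simp add: imul_assoc)
  finally have "mcong m (imul (imul Q P) A) (imul C (imul Q P))" .
  moreover have "coprime (mdet (imul Q P)) m" using cp cq by (simp add: mdet_imul)
  ultimately show ?thesis unfolding msim_def by blast
qed

lemma msim_mcong:
  assumes "msim m A B" "mcong m A A'" "mcong m B B'"
  shows "msim m A' B'"
proof -
  obtain P where cp: "coprime (mdet P) m" and h: "mcong m (imul P A) (imul B P)"
    using assms unfolding msim_def by blast
  have "mcong m (imul P A') (imul P A)" by (rule mcong_imul[OF mcong_refl mcong_sym[OF assms(2)]])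
  also note h
  also have "mcong m (imul B P) (imul B' P)" by (rule mcong_imul[OF assms(3) mcong_refl])
  finally show ?thesis unfolding msim_def using cp by blast
qed

lemma mcong_imp_msim: "mcong m A B \<Longrightarrow> msim m A B"
  by (rule msim_mcong[OF msim_refl mcong_refl])

lemma conj2_imp_msim:
  assumes "conj2 m A B"
  shows "msim m A B"
proof -
  obtain P Q where P: "P \<in> GL2 m" and QP: "mmul m Q P = mred m mI"
    and B: "B = mmul m (mmul m P A) Q"
    using assms unfolding conj2_def by blast
  have QP': "mcong m (imul Q P) mI" using QP by (simp add: mmul_eq mcong_def)
  have "mcong m (imul B P) (imul (imul (imul P A) Q) P)"
    unfolding B mmul_eq by (rule mcong_imul[OF _ mcong_refl]) (simp add: mcong_def)
  also have "imul (imul (imul P A) Q) P = imul (imul P A) (imul Q P)" by (simp add: imul_assoc)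
  also have "mcong m \<dots> (imul (imul P A) mI)" by (rule mcong_imul[OF mcong_refl QP'])
  finally have "mcong m (imul P A) (imul B P)" by (simp add: mcong_sym)
  then show ?thesis unfolding msim_def using P by (intro exI[of _ P]) (auto simp: GL2_def)
qed

text \<open>Conversely, a similarity between canonical representatives yields a conjugating pair
  P0, Q0 = det(P)^-1 adj P in GL(2, Z/mZ).\<close>

lemma msim_imp_conj2:
  assumes "msim m A B" "mred m B = B"
  shows "conj2 m A B"
proof -
  obtain P where cp: "coprime (mdet P) m" and h: "mcong m (imul P A) (imul B P)"
    using assms unfolding msim_def by blast
  obtain u where u: "[mdet P * u = 1] (mod m)" using cong_solve_coprime_int[OF cp] by blast
  have cu: "coprime u m"
    using u by (metis coprime_1_left coprime_mult_left_iff cong_imp_coprime cong_sym)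
  define P0 where "P0 = mred m P"
  define Q0 where "Q0 = mred m (msmul u (madj P))"
  have mP: "mcong m P0 P" and mQ: "mcong m Q0 (msmul u (madj P))" by (simp_all add: P0_def Q0_def)
  have P0: "P0 \<in> GL2 m"
    using cong_imp_coprime[OF cong_sym[OF mcong_mdet[OF mP]] cp] by (simp add: GL2_def P0_def)
  have "coprime (mdet (msmul u (madj P))) m" using cu cp by simp
  then have Q0: "Q0 \<in> GL2 m"
    using cong_imp_coprime[OF cong_sym[OF mcong_mdet[OF mQ]]] by (simp add: GL2_def Q0_def)
  have uI: "mcong m (msmul (mdet P * u) mI) mI"
    using mcong_msmul[OF u mcong_refl, of mI] by simp
  have inv_r: "imul P (msmul u (madj P)) = msmul (mdet P * u) mI"
    by (simp add: madj_right mult.commute)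
  have inv_l: "imul (msmul u (madj P)) P = msmul (mdet P * u) mI"
    by (simp add: madj_left mult.commute)
  have "mcong m (imul P0 Q0) mI" using mcong_trans[OF mcong_imul[OF mP mQ]] inv_r uI by simp
  then have PQ: "mmul m P0 Q0 = mred m mI" by (simp add: mmul_eq mcong_def)
  have "mcong m (imul Q0 P0) mI" using mcong_trans[OF mcong_imul[OF mQ mP]] inv_l uI by simp
  then have QP: "mmul m Q0 P0 = mred m mI" by (simp add: mmul_eq mcong_def)
  have "mcong m (mmul m (mmul m P0 A) Q0) (imul (imul P A) (msmul u (madj P)))"
    unfolding mmul_eq mcong_mred by (rule mcong_imul[OF _ mQ]) (simp add: mcong_imul[OF mP mcong_refl])
  also have "mcong m \<dots> (imul (imul B P) (msmul u (madj P)))"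
    by (rule mcong_imul[OF h mcong_refl])
  also have "imul (imul B P) (msmul u (madj P)) = imul B (msmul (mdet P * u) mI)"
    by (simp only: imul_assoc inv_r)
  also have "mcong m \<dots> B"
    using mcong_imul[OF mcong_refl uI, of B] by simp
  finally have "B = mmul m (mmul m P0 A) Q0" using assms(2) by (simp add: mcong_def mmul_eq)
  then show ?thesis unfolding conj2_def using P0 Q0 PQ QP by blast
qed

lemma unique_representative:
  assumes "N \<in> S" "conj2 m A N"
    and "\<And>N1 N2. N1 \<in> S \<Longrightarrow> N2 \<in> S \<Longrightarrow> msim m N1 N2 \<Longrightarrow> N1 = N2"
  shows "\<exists>!N. N \<in> S \<and> conj2 m A N"
proof (rule ex1I[of _ N])
  show "N \<in> S \<and> conj2 m A N" using assms by blast
  fix N' assume "N' \<in> S \<and> conj2 m A N'"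
  then show "N' = N"
    using assms msim_trans[OF msim_sym[OF conj2_imp_msim] conj2_imp_msim] by blast
qed

lemma msim_invariants:
  assumes "msim m A B"
  shows "[mtr A = mtr B] (mod m)" "[mdet A = mdet B] (mod m)"
proof -
  obtain P where cp: "coprime (mdet P) m" and h: "mcong m (imul P A) (imul B P)"
    using assms unfolding msim_def by blast
  have "[mdet P * mdet A = mdet P * mdet B] (mod m)"
    using mcong_mdet[OF h] by (simp add: mdet_imul mult.commute)
  then show "[mdet A = mdet B] (mod m)" using cong_mult_lcancel[OF cp] by blast
  have "mcong m (imul (madj P) (imul P A)) (imul (madj P) (imul B P))"
    by (rule mcong_imul[OF mcong_refl h])
  from mcong_mtr[OF this]
  have "[mtr (msmul (mdet P) A) = mtr (imul (imul B P) (madj P))] (mod m)"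
    by (simp add: madj_conj mtr_imul_comm)
  moreover have "imul (imul B P) (madj P) = msmul (mdet P) B"
    by (simp add: imul_assoc madj_right)
  ultimately have "[mdet P * mtr A = mdet P * mtr B] (mod m)"
    by (cases A; cases B) (simp add: msmul_def mtr_def algebra_simps)
  then show "[mtr A = mtr B] (mod m)" using cong_mult_lcancel[OF cp] by blast
qed


section \<open>Matrices that are not scalar mod p\<close>

text \<open>A is not congruent to a scalar matrix mod p.  For 2x2 matrices over a field this means that
  A is cyclic: its minimal polynomial is its characteristic polynomial.\<close>

definition nonscalar :: "int \<Rightarrow> mat2 \<Rightarrow> bool" where
  "nonscalar p A = (case A of (a,b,c,d) \<Rightarrow> \<not> (p dvd b \<and> p dvd c \<and> p dvd (a - d)))"

definition companion :: "int \<Rightarrow> int \<Rightarrow> mat2" where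
  "companion t d = (0, -d, 1, t)"

lemma nonscalar_mred [simp]: "nonscalar p (mred p A) \<longleftrightarrow> nonscalar p A"
proof -
  have e: "\<And>u v. p dvd (u mod p - v mod p) \<longleftrightarrow> p dvd (u - v)"
    by (metis cong_iff_dvd_diff cong_def mod_mod_trivial)
  show ?thesis by (cases A) (simp add: nonscalar_def mred_def e dvd_mod_iff)
qed

lemma not_nonscalar_iff: "\<not> nonscalar p C \<longleftrightarrow> mcong p C (msmul (fst C) mI)"
  by (cases C) (auto simp add: nonscalar_def mcong_iff msmul_def mI_def cong_iff_dvd_diff dvd_diff_commute)

text \<open>Key lemma: a matrix A that is not scalar mod p has a cyclic vector v mod p, i.e. v and A v
  are independent mod p.  Then the matrix with columns v, A v conjugates the companion matrix of
  A to A, with a determinant prime to p and therefore a unit mod every power of p.\<close>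

lemma cyclic_vector:
  assumes "nonscalar p (a,b,c,d)"
  shows "\<exists>v1 v2. \<not> p dvd (v1*(c*v1+d*v2) - (a*v1+b*v2)*v2)"
proof (cases "p dvd c")
  case False then show ?thesis by (intro exI[of _ 1] exI[of _ 0]) simp
next
  case pc: True
  show ?thesis
  proof (cases "p dvd b")
    case False then show ?thesis by (intro exI[of _ 0] exI[of _ 1]) simp
  next
    case pb: True
    have "(c - b) - (1*(c*1+d*1) - (a*1+b*1)*1) = a - d" by simp
    moreover have "\<not> p dvd (a - d)" using pc pb assms by (simp add: nonscalar_def)
    moreover have "p dvd (c - b)" using pc pb by simp
    ultimately show ?thesis by (metis dvd_diff)
  qed
qed

lemma msim_companion:
  assumes p: "prime p" and n: "nonscalar p A"
  shows "msim (p^k) (companion (mtr A) (mdet A)) A"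
proof -
  obtain a b c d where A: "A = (a,b,c,d)" by (cases A)
  obtain v1 v2 where v: "\<not> p dvd (v1*(c*v1+d*v2) - (a*v1+b*v2)*v2)"
    using cyclic_vector n A by blast
  define V where "V = (v1, a*v1+b*v2, v2, c*v1+d*v2)"
  have "imul V (companion (mtr A) (mdet A)) = imul A V"
    by (simp add: A V_def imul_def companion_def mtr_def mdet_def algebra_simps)
  moreover have "coprime (mdet V) (p^k)"
    using prime_imp_power_coprime[OF p] v by (simp add: V_def mdet_def)
  ultimately show ?thesis unfolding msim_def by (intro exI[of _ V]) simp
qed

lemma nonscalar_classification:
  assumes p: "prime p" and "nonscalar p A" "nonscalar p B"
    and "[mtr A = mtr B] (mod p^k)" "[mdet A = mdet B] (mod p^k)"
  shows "msim (p^k) A B"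
proof -
  have "mcong (p^k) (companion (mtr A) (mdet A)) (companion (mtr B) (mdet B))"
    using assms(4,5) by (simp add: companion_def mcong_iff cong_uminus)
  then have "msim (p^k) A (companion (mtr B) (mdet B))"
    using msim_mcong[OF msim_sym[OF msim_companion[OF p assms(2)]] mcong_refl] by blast
  then show ?thesis using msim_trans msim_companion[OF p assms(3)] by blast
qed

lemma msim_scalar:
  assumes "msim p C D" "\<not> nonscalar p D"
  shows "\<not> nonscalar p C"
proof -
  obtain P where cp: "coprime (mdet P) p" and h: "mcong p (imul P C) (imul D P)"
    using assms unfolding msim_def by blast
  define s where "s = fst D"
  have D: "mcong p D (msmul s mI)" using assms(2) not_nonscalar_iff s_def by blast
  have "mcong p (imul P C) (msmul s P)"
    using mcong_trans[OF h mcong_imul[OF D mcong_refl]] by simp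
  then have "mcong p (imul (madj P) (imul P C)) (imul (madj P) (msmul s P))"
    by (rule mcong_imul[OF mcong_refl])
  moreover have "imul (madj P) (msmul s P) = msmul (mdet P) (msmul s mI)"
    by (simp add: madj_left mult.commute)
  ultimately have "mcong p C (msmul s mI)"
    using mcong_cancel[OF cp] by (simp add: madj_conj)
  moreover obtain c1 c2 c3 c4 where C: "C = (c1,c2,c3,c4)" by (cases C)
  ultimately have "p dvd c1 - s" "p dvd c4 - s" "p dvd c2" "p dvd c3"
    by (simp_all add: mcong_iff msmul_def mI_def cong_iff_dvd_diff)
  moreover have "p dvd (c1 - s) - (c4 - s)" using calculation(1,2) by (rule dvd_diff)
  ultimately show ?thesis by (simp add: C nonscalar_def)
qed


section \<open>Matrices congruent to a scalar mod p\<close>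

definition near_scalar :: "int \<Rightarrow> int \<Rightarrow> mat2 \<Rightarrow> mat2" where
  "near_scalar p b C = madd (msmul b mI) (msmul p C)"

lemma near_scalar_eq: "near_scalar p b (x1,x2,x3,x4) = (b + p*x1, p*x2, p*x3, b + p*x4)"
  by (simp add: near_scalar_def madd_def msmul_def mI_def)

lemma imul_near_scalar:
  "imul P (near_scalar p b C) = madd (msmul b P) (msmul p (imul P C))"
  "imul (near_scalar p b C) P = madd (msmul b P) (msmul p (imul C P))"
  by (cases P; cases C; simp add: near_scalar_def imul_def madd_def msmul_def mI_def algebra_simps)+

lemma mcong_scale:
  assumes "s \<noteq> 0"
  shows "mcong (s*m) (msmul s X) (msmul s Y) \<longleftrightarrow> mcong m X Y"
proof -
  have e: "\<And>x y. [s*x = s*y] (mod s*m) \<longleftrightarrow> [x = y] (mod m)"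
    using assms by (simp add: cong_iff_dvd_diff right_diff_distrib[symmetric])
  show ?thesis by (cases X; cases Y) (simp add: mcong_iff msmul_def e)
qed

text \<open>Lifting: bI + pC and bI + pD are similar mod p^2 iff C and D are similar mod p, because
  P (bI + pC) - (bI + pD) P = p (P C - D P) and det P is a unit mod p^2 iff it is one mod p.\<close>

lemma msim_near_scalar_iff:
  assumes "p \<noteq> 0"
  shows "msim (p^2) (near_scalar p b C) (near_scalar p b D) \<longleftrightarrow> msim p C D"
proof -
  have "mcong (p^2) (imul P (near_scalar p b C)) (imul (near_scalar p b D) P) \<longleftrightarrow>
        mcong p (imul P C) (imul D P)" for P
    using mcong_scale[OF assms, of p]
    by (simp add: imul_near_scalar mcong_madd_cancel power2_eq_square)
  moreover have "coprime x (p^2) \<longleftrightarrow> coprime x p" for x :: int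
    by simp
  ultimately show ?thesis unfolding msim_def by simp
qed

lemma cong_range_eq:
  fixes p x y :: int
  shows "[x = y] (mod p) \<Longrightarrow> 0 \<le> x \<Longrightarrow> x < p \<Longrightarrow> 0 \<le> y \<Longrightarrow> y < p \<Longrightarrow> x = y"
  using cong_less_imp_eq_int by blast

lemma dvd_range_eq:
  fixes p x y :: int
  shows "p dvd x - y \<Longrightarrow> 0 \<le> x \<Longrightarrow> x < p \<Longrightarrow> 0 \<le> y \<Longrightarrow> y < p \<Longrightarrow> x = y"
  using cong_range_eq[of x y p] by (simp add: cong_iff_dvd_diff)

lemma cong_scale_p:
  fixes p x y :: int
  assumes "p \<noteq> 0"
  shows "[p*x = p*y] (mod p^2) \<longleftrightarrow> [x = y] (mod p)"
  using assms by (simp add: cong_iff_dvd_diff power2_eq_square right_diff_distrib[symmetric])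

text \<open>Every multiple x of p is, mod p^2, of the form p * (delta * u) for a unit u mod p and a
  digit delta in [0, p).  This produces the free parameters of the normal forms.\<close>

lemma p_digit:
  fixes p u x :: int
  assumes p: "prime p" and u: "\<not> p dvd u" and x: "p dvd x"
  shows "\<exists>\<delta>. 0 \<le> \<delta> \<and> \<delta> < p \<and> [p * (\<delta> * u) = x] (mod p^2)"
proof -
  have p1: "p > 1" using prime_gt_1_int[OF p] .
  obtain y where y: "x = p * y" using x by blast
  have "coprime u p" using prime_imp_coprime[OF p u] by (simp add: coprime_commute)
  then obtain w where w: "[u * w = 1] (mod p)" using cong_solve_coprime_int by blast
  define \<delta> where "\<delta> = (y * w) mod p"
  have "[\<delta> * u = y * (u * w)] (mod p)"
    by (simp add: \<delta>_def cong_def mod_mult_right_eq algebra_simps)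
  also have "[y * (u * w) = y * 1] (mod p)" by (rule cong_mult[OF cong_refl w])
  finally have "[p * (\<delta> * u) = x] (mod p^2)" using cong_scale_p p1 y by simp
  moreover have "0 \<le> \<delta>" "\<delta> < p" using p1 by (simp_all add: \<delta>_def)
  ultimately show ?thesis by blast
qed


section \<open>Quadratic polynomials mod p\<close>

lemma preduce_coeff: "coeff (preduce p q) n = coeff q n mod p"
  by (simp add: preduce_def coeff_map_poly)

lemma preduce_quad: "preduce p [:a,b,c:] = [:a mod p, b mod p, c mod p:]"
  by (auto simp: poly_eq_iff preduce_coeff coeff_pCons split: nat.split)

lemma preduce_1: fixes p :: int shows "p > 1 \<Longrightarrow> preduce p 1 = 1"
  by (auto simp: poly_eq_iff preduce_coeff coeff_1)

lemma preduce_decomp: "q = preduce p q + smult p (map_poly (\<lambda>c. c div p) q)"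
  by (simp add: poly_eq_iff preduce_coeff coeff_map_poly)

lemma preduce_add_smult: "preduce p (a + smult p b) = preduce p a"
  by (simp add: poly_eq_iff preduce_coeff)

lemma preduce_mult: "preduce p (g*h) = preduce p (preduce p g * preduce p h)"
proof -
  define g1 g2 h1 h2 where "g1 = preduce p g" "g2 = map_poly (\<lambda>c. c div p) g"
    "h1 = preduce p h" "h2 = map_poly (\<lambda>c. c div p) h"
  have g: "g = g1 + smult p g2" and h: "h = h1 + smult p h2"
    using preduce_decomp unfolding g1_g2_h1_h2_def by blast+
  have "g*h = g1*h1 + smult p (g1*h2 + g2*h1 + smult p (g2*h2))"
    unfolding g h by (simp add: algebra_simps smult_add_right)
  then show ?thesis by (simp add: preduce_add_smult g1_g2_h1_h2_def)
qed

lemma poly_preduce: "[poly (preduce p q) x = poly q x] (mod p)"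
proof -
  have "poly q x = poly (preduce p q) x + p * poly (map_poly (\<lambda>c. c div p) q) x"
    by (subst preduce_decomp[of q p]) simp
  then show ?thesis by (simp add: cong_iff_lin)
qed

lemma degree_preduce_ge: "coeff q n mod p \<noteq> 0 \<Longrightarrow> n \<le> degree (preduce p q)"
  by (rule le_degree) (simp add: preduce_coeff)

lemma degree_preduce_le: "degree (preduce p q) \<le> degree q"
  by (rule degree_le) (simp add: preduce_coeff coeff_eq_0)

lemma lead_coeff_preduce:
  fixes p :: int
  assumes p: "prime p" and "preduce p g \<noteq> 0"
  shows "\<not> p dvd lead_coeff (preduce p g)"
proof
  assume d: "p dvd lead_coeff (preduce p g)"
  have "lead_coeff (preduce p g) = coeff g (degree (preduce p g)) mod p" by (simp add: preduce_coeff)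
  then have "lead_coeff (preduce p g) = 0"
    using d prime_gt_1_int[OF p] by (metis dvd_imp_mod_0 mod_mod_trivial)
  then show False using assms(2) by simp
qed

lemma degree_preduce_mult:
  fixes p :: int
  assumes p: "prime p" and "preduce p g \<noteq> 0" "preduce p h \<noteq> 0"
  shows "degree (preduce p g) + degree (preduce p h) \<le> degree (preduce p (g*h))"
proof -
  define g' h' where "g' = preduce p g" "h' = preduce p h"
  have "\<not> p dvd lead_coeff g' * lead_coeff h'"
    using lead_coeff_preduce[OF p] assms(2,3) prime_dvd_mult_iff[OF p] g'_h'_def by blast
  moreover have "coeff (g'*h') (degree g' + degree h') = lead_coeff g' * lead_coeff h'"
    by (rule coeff_mult_degree_sum)
  ultimately have "degree g' + degree h' \<le> degree (preduce p (g'*h'))"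
    by (intro degree_preduce_ge) (simp add: dvd_eq_mod_eq_0)
  then show ?thesis using preduce_mult g'_h'_def by metis
qed

lemma linear_has_root_mod:
  fixes p :: int
  assumes p: "prime p" and d1: "degree (preduce p g) = 1"
  shows "\<exists>x. [poly g x = 0] (mod p)"
proof -
  define g' where "g' = preduce p g"
  define u v where "u = coeff g' 1" "v = coeff g' 0"
  have "preduce p g \<noteq> 0" using d1 by auto
  then have nu: "\<not> p dvd u" using lead_coeff_preduce[OF p, of g] d1 by (simp add: u_v_def g'_def)
  have g'e: "g' = [:v,u:]"
    using d1 by (auto simp: poly_eq_iff u_v_def g'_def coeff_pCons coeff_eq_0 split: nat.split)
  have "coprime u p" using prime_imp_coprime[OF p nu] by (simp add: coprime_commute)
  then obtain w where w: "[u*w = 1] (mod p)" using cong_solve_coprime_int by blast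
  have "p dvd v*(1 - u*w)" using w by (simp add: cong_iff_dvd_diff dvd_diff_commute)
  moreover have "poly g' (-v*w) = v*(1 - u*w)" by (simp add: g'e algebra_simps)
  ultimately have "[poly g' (-v*w) = 0] (mod p)" by (simp add: cong_0_iff)
  then have "[poly g (-v*w) = 0] (mod p)"
    using cong_trans[OF cong_sym[OF poly_preduce]] g'_def by blast
  then show ?thesis by blast
qed

text \<open>A monic quadratic with a root r mod p factors as (X - r)(X + r + b1) mod p.\<close>

lemma irreducible_mod_no_root:
  fixes p :: int
  assumes p: "prime p" and irr: "irreducible_mod p [:b0,b1,1:]"
  shows "\<not> p dvd r*r + b1*r + b0"
proof
  assume r: "p dvd r*r + b1*r + b0"
  have "[b0 = -(r*(r+b1))] (mod p)"
    using r by (simp add: cong_iff_dvd_diff algebra_simps)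
  then have "preduce p [:b0,b1,1:] = preduce p ([:-r,1:] * [:r+b1,1:])"
    by (simp add: preduce_quad cong_def algebra_simps)
  moreover have "\<forall>g h. preduce p [:b0,b1,1:] = preduce p (g * h) \<longrightarrow>
      degree (preduce p g) = 0 \<or> degree (preduce p h) = 0"
    using irr unfolding irreducible_mod_def by (rule conjunct2)
  ultimately have "degree (preduce p [:-r,1:]) = 0 \<or> degree (preduce p [:r+b1,1:]) = 0"
    by (metis (no_types))
  moreover have "1 \<le> degree (preduce p [:-r,1:])" "1 \<le> degree (preduce p [:r+b1,1:])"
    using prime_gt_1_int[OF p] by (auto intro!: degree_preduce_ge)
  ultimately show False by simp
qed

text \<open>Conversely, a nontrivial factorization mod p of a quadratic has a linear factor, and
  hence produces a root.\<close>

lemma no_root_irreducible_mod: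
  fixes p :: int
  assumes p: "prime p" and nr: "\<forall>x. \<not> p dvd x*x + b1*x + b0"
  shows "irreducible_mod p [:b0,b1,1:]"
proof -
  have deg2: "2 \<le> degree (preduce p [:b0,b1,1:])"
    by (rule degree_preduce_ge) (simp add: prime_gt_1_int[OF p] numeral_2_eq_2)
  have deg_le: "degree (preduce p [:b0,b1,1:]) \<le> 2"
    using degree_preduce_le[of p "[:b0,b1,1:]"] by simp
  have False if eq: "preduce p [:b0,b1,1:] = preduce p (g*h)"
    and dg: "degree (preduce p g) \<noteq> 0" and dh: "degree (preduce p h) \<noteq> 0" for g h
  proof -
    have "degree (preduce p g) + degree (preduce p h) \<le> 2"
      using degree_preduce_mult[OF p, of g h] dg dh eq deg_le by fastforce
    then have "degree (preduce p g) = 1" using dg dh by simp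
    then obtain x where gx: "[poly g x = 0] (mod p)" using linear_has_root_mod[OF p] by blast
    have "[poly [:b0,b1,1:] x = poly (preduce p [:b0,b1,1:]) x] (mod p)"
      by (rule cong_sym[OF poly_preduce])
    also have "poly (preduce p [:b0,b1,1:]) x = poly (preduce p (g*h)) x" using eq by simp
    also have "[poly (preduce p (g*h)) x = poly g x * poly h x] (mod p)"
      using poly_preduce[of p "g*h" x] by simp
    also have "[poly g x * poly h x = 0 * poly h x] (mod p)" by (intro cong_mult gx cong_refl)
    finally have "p dvd poly [:b0,b1,1:] x" by (simp add: cong_0_iff)
    moreover have "poly [:b0,b1,1:] x = x*x + b1*x + b0" by (simp add: algebra_simps)
    ultimately show False using nr by (metis add.commute)
  qed
  then show ?thesis unfolding irreducible_mod_def using deg2 by fastforce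
qed

lemma irreducible_mod_quadratic_iff:
  fixes p :: int
  assumes "prime p"
  shows "irreducible_mod p [:b0,b1,1:] \<longleftrightarrow> (\<forall>x. \<not> p dvd x*x + b1*x + b0)"
  using irreducible_mod_no_root[OF assms] no_root_irreducible_mod[OF assms] by blast

section \<open>Minimal polynomials of 2x2 matrices mod p\<close>

lemma peval_one: "peval m 1 A = mred m mI"
proof -
  have "peval m 1 A = mred m (madd (msmul 1 mI) (mmul m (mred m mzero) A))"
    by (simp add: peval_def)
  also have "\<dots> = mred m mI" by (simp add: mmul_eq)
  finally show ?thesis .
qed

lemma peval_lin: "peval m [:c0,1:] A = mred m (madd (msmul c0 mI) A)"
proof -
  have "peval m [:c0,1:] A =
      mred m (madd (msmul c0 mI) (mmul m (mred m (madd (msmul 1 mI) (mmul m (mred m mzero) A))) A))"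
    by (simp add: peval_def)
  also have "\<dots> = mred m (madd (msmul c0 mI) A)" by (simp add: mmul_eq)
  finally show ?thesis .
qed

lemma peval_quad: "peval m [:c0,c1,1:] A = mred m (madd (msmul c0 mI) (madd (msmul c1 A) (imul A A)))"
proof -
  have "peval m [:c0,c1,1:] A = mred m (madd (msmul c0 mI) (mmul m (mred m (madd (msmul c1 mI)
      (mmul m (mred m (madd (msmul 1 mI) (mmul m (mred m mzero) A))) A))) A))"
    by (simp add: peval_def)
  also have "\<dots> = mred m (madd (msmul c0 mI) (madd (msmul c1 A) (imul A A)))" by (simp add: mmul_eq)
  finally show ?thesis .
qed

lemma cayley_hamilton:
  "madd (msmul (mdet B) mI) (madd (msmul (- mtr B) B) (imul B B)) = mzero"
  by (cases B) (simp add: madd_def msmul_def mI_def imul_def mtr_def mdet_def mzero_def algebra_simps)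

lemma nonscalar_independent:
  fixes p :: int
  assumes p: "prime p" and n: "nonscalar p A"
    and h: "mcong p (madd (msmul x mI) (msmul y A)) mzero"
  shows "p dvd y \<and> p dvd x"
proof -
  obtain a b c d where A: "A = (a,b,c,d)" by (cases A)
  have e: "p dvd x + y*a" "p dvd y*b" "p dvd y*c" "p dvd x + y*d"
    using h by (simp_all add: A mcong_iff madd_def msmul_def mI_def mzero_def cong_0_iff)
  have py: "p dvd y"
  proof (rule ccontr)
    assume ny: "\<not> p dvd y"
    have "p dvd b" "p dvd c" using e(2,3) ny prime_dvd_mult_iff[OF p] by blast+
    moreover have "p dvd (x + y*a) - (x + y*d)" using e(1,4) by (rule dvd_diff)
    then have "p dvd y*(a - d)" by (simp add: algebra_simps)
    then have "p dvd a - d" using ny prime_dvd_mult_iff[OF p] by blast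
    ultimately show False using n by (simp add: A nonscalar_def)
  qed
  moreover have "p dvd (x + y*a) - y*a" using e(1) py by (intro dvd_diff) auto
  ultimately show ?thesis by simp
qed

text \<open>A scalar matrix mod p has a linear minimal polynomial.\<close>

lemma minpoly_degree_2_nonscalar:
  fixes p :: int
  assumes "minpoly_mod p (mred p A) q" "degree q = 2"
  shows "nonscalar p A"
proof (rule ccontr)
  assume "\<not> nonscalar p A"
  then have sc: "mcong p A (msmul (fst A) mI)" using not_nonscalar_iff by blast
  have "peval p [:-(fst A), 1:] (mred p A) = mred p (madd (msmul (-(fst A)) mI) (mred p A))"
    by (rule peval_lin)
  also have "\<dots> = mred p (madd (msmul (-(fst A)) mI) (msmul (fst A) mI))"
    using mcong_madd[OF mcong_refl sc, of "msmul (-(fst A)) mI"] by (simp add: mcong_def)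
  also have "madd (msmul (-(fst A)) mI) (msmul (fst A) mI) = mzero"
    by (simp add: madd_def msmul_def mI_def mzero_def)
  finally have "peval p [:-(fst A), 1:] (mred p A) = mred p mzero" .
  moreover have "lead_coeff [:-(fst A), 1:] = 1" by simp
  ultimately have "degree q \<le> degree [:-(fst A), 1:]"
    using assms(1) unfolding minpoly_mod_def by blast
  then show False using assms(2) by simp
qed

lemma minpoly_quadratic:
  fixes p :: int
  assumes p: "prime p" and m: "minpoly_mod p (mred p A) [:c0,c1,1:]"
  shows "nonscalar p A \<and> [mtr A = -c1] (mod p) \<and> [mdet A = c0] (mod p)"
proof -
  have n: "nonscalar p A" using minpoly_degree_2_nonscalar[OF m] by simp
  define B where "B = mred p A"
  have "peval p [:c0,c1,1:] B = mred p mzero" using m unfolding minpoly_mod_def B_def by blast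
  then have "mcong p (madd (msmul c0 mI) (madd (msmul c1 B) (imul B B))) mzero"
    by (simp add: peval_quad mcong_def)
  moreover have "madd (msmul c0 mI) (madd (msmul c1 B) (imul B B)) =
       madd (msmul (c0 - mdet B) mI) (msmul (c1 + mtr B) B)"
    by (cases B) (simp add: madd_def msmul_def mI_def imul_def mtr_def mdet_def algebra_simps)
  moreover have "nonscalar p B" using n by (simp add: B_def)
  ultimately have "p dvd (c1 + mtr B) \<and> p dvd (c0 - mdet B)"
    using nonscalar_independent[OF p] by simp
  moreover have "p dvd mtr A - mtr B" "p dvd mdet A - mdet B"
    using mcong_mtr[of p A B] mcong_mdet[of p A B] by (simp_all add: B_def cong_iff_dvd_diff)
  ultimately have "p dvd (mtr A - mtr B) + (c1 + mtr B)" "p dvd (mdet A - mdet B) - (c0 - mdet B)"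
    by (blast intro: dvd_add dvd_diff)+
  then have "[mtr A = -c1] (mod p)" "[mdet A = c0] (mod p)"
    by (simp_all add: cong_iff_dvd_diff)
  then show ?thesis using n by simp
qed

text \<open>If the minimal polynomial mod p is a power f^k of a monic quadratic f, then k = 1:
  k = 0 is impossible and by Cayley-Hamilton the degree is at most 2.\<close>

lemma minpoly_power_quadratic:
  fixes p :: int
  assumes p: "prime p" and mp: "minpoly_mod p B (preduce p ([:a0,a1,1:]^k))" and B: "mred p B = B"
  shows "k = 1"
proof -
  define f where "f = [:a0,a1,1:]"
  have p1: "p > 1" using prime_gt_1_int[OF p] .
  have dfk: "degree (f^k) = 2*k" by (simp add: f_def degree_power_eq)
  have lfk: "lead_coeff (f^k) = 1" by (simp add: f_def lead_coeff_power)
  have dq: "degree (preduce p (f^k)) = 2*k"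
    using degree_preduce_le[of p "f^k"] degree_preduce_ge[of "f^k" "2*k" p] dfk lfk p1 by simp
  have "peval p [:mdet B, - mtr B, 1:] B = mred p mzero"
    using cayley_hamilton[of B] by (simp add: peval_quad)
  moreover have "lead_coeff [:mdet B, - mtr B, 1:] = 1" by simp
  ultimately have "degree (preduce p (f^k)) \<le> degree [:mdet B, - mtr B, 1:]"
    using mp unfolding minpoly_mod_def f_def by blast
  then have "k \<le> 1" using dq by simp
  moreover have "k \<noteq> 0"
  proof
    assume "k = 0"
    then have "peval p 1 B = mred p mzero" using mp preduce_1[OF p1] unfolding minpoly_mod_def by simp
    then show False using p1 by (simp add: peval_one mred_def mI_def mzero_def)
  qed
  ultimately show "k = 1" by simp
qed


section \<open>Rational canonical forms of 2x2 matrices over Z_p\<close>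

definition diag_form :: "int \<Rightarrow> mat2 \<Rightarrow> bool" where
  "diag_form p D \<longleftrightarrow> (\<exists>\<alpha> \<delta>. 0 \<le> \<alpha> \<and> \<alpha> \<le> \<delta> \<and> \<delta> < p \<and> D = (\<alpha>,0,0,\<delta>))"

definition jordan_form :: "int \<Rightarrow> mat2 \<Rightarrow> bool" where
  "jordan_form p D \<longleftrightarrow> (\<exists>\<alpha>. 0 \<le> \<alpha> \<and> \<alpha> < p \<and> D = (\<alpha>,1,0,\<alpha>))"

definition irreducible_form :: "int \<Rightarrow> mat2 \<Rightarrow> bool" where
  "irreducible_form p D \<longleftrightarrow> (\<exists>b0 b1. 0 \<le> b0 \<and> b0 < p \<and> 0 \<le> b1 \<and> b1 < p \<and>
     irreducible_mod p [:b0,b1,1:] \<and> D = (0,1,-b0,-b1))"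

definition canonical_form :: "int \<Rightarrow> mat2 \<Rightarrow> bool" where
  "canonical_form p D \<longleftrightarrow> diag_form p D \<or> jordan_form p D \<or> irreducible_form p D"

definition char_root :: "int \<Rightarrow> int \<Rightarrow> int \<Rightarrow> bool" where
  "char_root p t d \<longleftrightarrow> (\<exists>r. p dvd r*r - t*r + d)"

lemma char_root_cong:
  assumes "[t = t'] (mod p)" "[d = d'] (mod p)"
  shows "char_root p t d \<longleftrightarrow> char_root p t' d'"
proof -
  have "[r*r - t*r + d = r*r - t'*r + d'] (mod p)" for r
    using assms by (intro cong_add cong_diff cong_mult cong_refl)
  then show ?thesis unfolding char_root_def using cong_dvd_iff by blast
qed

lemma msim_mod_p:
  fixes p :: int
  assumes p: "prime p" and "nonscalar p C" "nonscalar p D"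
    and "[mtr C = mtr D] (mod p)" "[mdet C = mdet D] (mod p)"
  shows "msim p C D"
  using nonscalar_classification[OF p assms(2,3), of 1] assms(4,5) by simp

lemma char_poly_split:
  fixes p :: int
  assumes p1: "p > 1" and r: "p dvd r*r - t*r + d"
  shows "\<exists>r0 s0. 0 \<le> r0 \<and> r0 \<le> s0 \<and> s0 < p \<and> [r0 + s0 = t] (mod p) \<and> [r0 * s0 = d] (mod p)"
proof -
  define u v where "u = r mod p" "v = (t - r) mod p"
  have "[u + v = r + (t - r)] (mod p)" "[u * v = r * (t - r)] (mod p)"
    unfolding u_v_def by (intro cong_add cong_mult; simp add: cong_def)+
  moreover have "r * (t - r) - d = -(r*r - t*r + d)" by (simp add: algebra_simps)
  then have "[r * (t - r) = d] (mod p)" by (simp only: cong_iff_dvd_diff dvd_minus_iff r)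
  ultimately have uv: "[u + v = t] (mod p)" "[u * v = d] (mod p)"
    by (auto intro: cong_trans)
  have "0 \<le> u" "u < p" "0 \<le> v" "v < p" using p1 by (simp_all add: u_v_def)
  then show ?thesis
  proof (cases "u \<le> v")
    case True then show ?thesis using uv \<open>0 \<le> u\<close> \<open>v < p\<close> by blast
  next
    case False then show ?thesis using uv \<open>0 \<le> v\<close> \<open>u < p\<close>
      by (intro exI[of _ v] exI[of _ u]) (simp add: add.commute mult.commute)
  qed
qed

lemma char_poly_irreducible:
  fixes p :: int
  assumes p: "prime p" and nr: "\<not> char_root p t d"
  shows "irreducible_mod p [:d mod p, (-t) mod p, 1:]"
proof -
  have "[x*x + ((-t) mod p)*x + d mod p = x*x - t*x + d] (mod p)" for x
  proof -
    have "[x*x + ((-t) mod p)*x + d mod p = x*x + (-t)*x + d] (mod p)"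
      by (intro cong_add cong_mult cong_refl) (simp_all add: cong_def)
    then show ?thesis by simp
  qed
  then show ?thesis
    using nr unfolding irreducible_mod_quadratic_iff[OF p] char_root_def by (metis cong_dvd_iff)
qed

text \<open>Every non-scalar matrix mod p has a non-scalar canonical form with the same trace and
  determinant: diagonal or a Jordan block if the characteristic polynomial has a root, the
  companion matrix otherwise.\<close>

lemma nonscalar_canonical_form:
  fixes p :: int
  assumes p: "prime p"
  shows "\<exists>D. canonical_form p D \<and> nonscalar p D \<and> [mtr D = t] (mod p) \<and> [mdet D = d] (mod p)"
proof -
  have p1: "p > 1" using prime_gt_1_int[OF p] .
  have n1: "\<not> p dvd 1" using p1 by (auto dest: zdvd_imp_le)
  show ?thesis
  proof (cases "char_root p t d")
    case True
    then obtain r0 s0 where r: "0 \<le> r0" "r0 \<le> s0" "s0 < p"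
      and ts: "[r0 + s0 = t] (mod p)" and ds: "[r0 * s0 = d] (mod p)"
      using char_poly_split[OF p1] unfolding char_root_def by blast
    show ?thesis
    proof (cases "r0 = s0")
      case True
      have "jordan_form p (r0,1,0,r0)" unfolding jordan_form_def using r by auto
      moreover have "nonscalar p (r0,1,0,r0)" using n1 by (simp add: nonscalar_def)
      ultimately show ?thesis using ts ds True
        by (intro exI[of _ "(r0,1,0,r0)"]) (simp add: canonical_form_def mtr_def mdet_def)
    next
      case False
      have "\<not> p dvd r0 - s0" using False r dvd_range_eq by fastforce
      then have "nonscalar p (r0,0,0,s0)" by (simp add: nonscalar_def)
      moreover have "diag_form p (r0,0,0,s0)" unfolding diag_form_def using r by auto
      ultimately show ?thesis using ts ds
        by (intro exI[of _ "(r0,0,0,s0)"]) (simp add: canonical_form_def mtr_def mdet_def)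
    qed
  next
    case False
    define b0 b1 where "b0 = d mod p" "b1 = (-t) mod p"
    have "irreducible_form p (0,1,-b0,-b1)"
      unfolding irreducible_form_def b0_b1_def
      using p1 char_poly_irreducible[OF p False] by auto
    moreover have "nonscalar p (0,1,-b0,-b1)" using n1 by (simp add: nonscalar_def)
    moreover have "[- b1 = t] (mod p)" "[b0 = d] (mod p)"
      unfolding b0_b1_def by (simp_all add: cong_def mod_minus_eq)
    ultimately show ?thesis
      by (intro exI[of _ "(0,1,-b0,-b1)"]) (simp add: canonical_form_def mtr_def mdet_def)
  qed
qed

lemma canonical_form_exists:
  fixes p :: int
  assumes p: "prime p"
  shows "\<exists>D. canonical_form p D \<and> msim p C D"
proof (cases "nonscalar p C")
  case False
  define \<alpha> where "\<alpha> = fst C mod p"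
  have "mcong p C (msmul (fst C) mI)" using False not_nonscalar_iff by blast
  also have "mcong p (msmul (fst C) mI) (\<alpha>,0,0,\<alpha>)"
    by (simp add: \<alpha>_def mcong_iff msmul_def mI_def cong_def)
  finally have "msim p C (\<alpha>,0,0,\<alpha>)" by (rule mcong_imp_msim)
  moreover have "diag_form p (\<alpha>,0,0,\<alpha>)"
    unfolding diag_form_def using prime_gt_1_int[OF p] by (auto simp: \<alpha>_def)
  ultimately show ?thesis unfolding canonical_form_def by blast
next
  case True
  obtain D where "canonical_form p D" "nonscalar p D"
    "[mtr D = mtr C] (mod p)" "[mdet D = mdet C] (mod p)"
    using nonscalar_canonical_form[OF p] by blast
  then show ?thesis using msim_mod_p[OF p True] by (blast intro: cong_sym)
qed


text \<open>Canonical forms with a root: diagonal forms are determined by the unordered pair of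
  eigenvalues, Jordan blocks by their eigenvalue, and a diagonal form similar to a Jordan
  block would have a double eigenvalue, hence be scalar.\<close>

lemma diag_forms_eq:
  fixes p :: int
  assumes p: "prime p"
    and r: "0 \<le> a" "a \<le> d" "d < p" "0 \<le> a'" "a' \<le> d'" "d' < p"
    and t: "p dvd (a + d) - (a' + d')" and dt: "p dvd a*d - a'*d'"
  shows "a = a' \<and> d = d'"
proof -
  have "p dvd a*((a + d) - (a' + d')) - (a*d - a'*d')" by (rule dvd_diff[OF dvd_mult[OF t] dt])
  moreover have "a*((a + d) - (a' + d')) - (a*d - a'*d') = (a - a')*(a - d')" by (simp add: algebra_simps)
  ultimately have "p dvd a - a' \<or> p dvd a - d'" using prime_dvd_mult_iff[OF p] by simp
  then show ?thesis
  proof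
    assume "p dvd a - a'"
    then have "a = a'" using r by (intro dvd_range_eq) auto
    moreover from this have "p dvd d - d'" using t by simp
    then have "d = d'" using r by (intro dvd_range_eq) auto
    ultimately show ?thesis by simp
  next
    assume "p dvd a - d'"
    then have "a = d'" using r by (intro dvd_range_eq) auto
    moreover from this have "p dvd d - a'" using t by (simp add: algebra_simps)
    then have "d = a'" using r by (intro dvd_range_eq) auto
    ultimately show ?thesis using r by simp
  qed
qed

lemma jordan_forms_eq:
  fixes p :: int
  assumes p: "prime p" and r: "0 \<le> b" "b < p" "0 \<le> b'" "b' < p"
    and t: "p dvd 2*b - 2*b'" and dt: "p dvd b*b - b'*b'"
  shows "b = b'"
proof -
  have "p dvd (b*b - b'*b') - b'*(2*b - 2*b')" by (rule dvd_diff[OF dt dvd_mult[OF t]])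
  moreover have "(b*b - b'*b') - b'*(2*b - 2*b') = (b - b')*(b - b')" by (simp add: algebra_simps)
  ultimately have "p dvd b - b'" using prime_dvd_mult_iff[OF p] by simp
  then show ?thesis using r by (intro dvd_range_eq) auto
qed

lemma diag_jordan_distinct:
  fixes p :: int
  assumes p: "prime p" and ns: "\<not> p dvd a - d"
    and t: "p dvd (a + d) - 2*b" and dt: "p dvd a*d - b*b"
  shows False
proof -
  have "p dvd (a*d - b*b) - b*((a + d) - 2*b)" by (rule dvd_diff[OF dt dvd_mult[OF t]])
  moreover have "(a*d - b*b) - b*((a + d) - 2*b) = (a - b)*(d - b)" by (simp add: algebra_simps)
  ultimately have "p dvd a - b \<or> p dvd d - b" using prime_dvd_mult_iff[OF p] by simp
  moreover have "a - d = (a - b) - (d - b)" "d - b = ((a + d) - 2*b) - (a - b)"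
    "a - b = ((a + d) - 2*b) - (d - b)" by simp_all
  ultimately show False using ns t by (metis dvd_diff)
qed

lemma split_forms_eq:
  fixes p :: int
  assumes p: "prime p"
    and D1: "diag_form p D1 \<or> jordan_form p D1" and D2: "diag_form p D2 \<or> jordan_form p D2"
    and t: "p dvd mtr D1 - mtr D2" and d: "p dvd mdet D1 - mdet D2"
    and n: "nonscalar p D1 \<longleftrightarrow> nonscalar p D2"
  shows "D1 = D2"
proof -
  have t': "p dvd mtr D2 - mtr D1" and d': "p dvd mdet D2 - mdet D1"
    using t d by (simp_all add: dvd_diff_commute)
  have nsJ: "nonscalar p (b,1,0,b)" for b
    using prime_gt_1_int[OF p] by (auto simp: nonscalar_def dest: zdvd_imp_le)
  show ?thesis
  proof (cases "diag_form p D1"; cases "diag_form p D2")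
    assume "diag_form p D1" "diag_form p D2"
    then obtain a d a' d' where "0 \<le> a" "a \<le> d" "d < p" "D1 = (a,0,0,d)"
      "0 \<le> a'" "a' \<le> d'" "d' < p" "D2 = (a',0,0,d')" unfolding diag_form_def by blast
    then show ?thesis using diag_forms_eq[OF p] t d by (simp add: mtr_def mdet_def)
  next
    assume "\<not> diag_form p D1" "\<not> diag_form p D2"
    then obtain b b' where "0 \<le> b" "b < p" "D1 = (b,1,0,b)" "0 \<le> b'" "b' < p" "D2 = (b',1,0,b')"
      using D1 D2 unfolding jordan_form_def by blast
    then show ?thesis using jordan_forms_eq[OF p] t d by (simp add: mtr_def mdet_def algebra_simps)
  next
    assume "diag_form p D1" "\<not> diag_form p D2"
    then obtain a d b where "D1 = (a,0,0,d)" "D2 = (b,1,0,b)"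
      using D2 unfolding diag_form_def jordan_form_def by blast
    then show ?thesis using diag_jordan_distinct[OF p] n nsJ t d
      by (simp add: nonscalar_def mtr_def mdet_def)
  next
    assume "\<not> diag_form p D1" "diag_form p D2"
    then obtain a d b where "D2 = (a,0,0,d)" "D1 = (b,1,0,b)"
      using D1 unfolding diag_form_def jordan_form_def by blast
    then show ?thesis using diag_jordan_distinct[OF p] n nsJ t' d'
      by (simp add: nonscalar_def mtr_def mdet_def)
  qed
qed

lemma canonical_char_root_iff:
  fixes p :: int
  assumes p: "prime p" and D: "canonical_form p D"
  shows "char_root p (mtr D) (mdet D) \<longleftrightarrow> \<not> irreducible_form p D"
proof -
  have "char_root p (mtr D) (mdet D)" if split: "diag_form p D \<or> jordan_form p D"
  proof -
    obtain a d b where "D = (a,b,0,d)" "a = d \<or> b = 0"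
      using split unfolding diag_form_def jordan_form_def by blast
    then have "fst D * fst D - mtr D * fst D + mdet D = 0" by (auto simp: mtr_def mdet_def algebra_simps)
    then show ?thesis unfolding char_root_def by (metis dvd_0_right)
  qed
  moreover have "\<not> char_root p (mtr D) (mdet D)" if comp: "irreducible_form p D"
  proof -
    obtain b0 b1 where irr: "irreducible_mod p [:b0,b1,1:]" and "D = (0,1,-b0,-b1)"
      using comp unfolding irreducible_form_def by blast
    then have "char_root p (mtr D) (mdet D) \<longleftrightarrow> (\<exists>r. p dvd r*r + b1*r + b0)"
      by (simp add: char_root_def mtr_def mdet_def)
    then show ?thesis using irr irreducible_mod_quadratic_iff[OF p] by simp
  qed
  ultimately show ?thesis using D unfolding canonical_form_def by blast
qed

lemma canonical_form_unique:
  fixes p :: int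
  assumes p: "prime p" and D1: "canonical_form p D1" and D2: "canonical_form p D2"
    and s: "msim p D1 D2"
  shows "D1 = D2"
proof -
  have t: "[mtr D1 = mtr D2] (mod p)" and d: "[mdet D1 = mdet D2] (mod p)"
    using msim_invariants[OF s] by simp_all
  have irr: "irreducible_form p D1 \<longleftrightarrow> irreducible_form p D2"
    using canonical_char_root_iff[OF p D1] canonical_char_root_iff[OF p D2] char_root_cong[OF t d]
    by simp
  show ?thesis
  proof (cases "irreducible_form p D1")
    case True
    then obtain b0 b1 c0 c1 where "0 \<le> b0" "b0 < p" "0 \<le> b1" "b1 < p" "0 \<le> c0" "c0 < p"
      "0 \<le> c1" "c1 < p" "D1 = (0,1,-b0,-b1)" "D2 = (0,1,-c0,-c1)"
      using irr unfolding irreducible_form_def by blast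
    moreover from this have "[b1 = c1] (mod p)" "[b0 = c0] (mod p)"
      using t d by (simp_all add: mtr_def mdet_def cong_minus_minus_iff)
    ultimately show ?thesis using cong_range_eq by simp
  next
    case False
    have "nonscalar p D1 \<longleftrightarrow> nonscalar p D2"
      using msim_scalar[OF s] msim_scalar[OF msim_sym[OF s]] by blast
    then show ?thesis using split_forms_eq[OF p] False irr D1 D2 t d
      unfolding canonical_form_def by (simp add: cong_iff_dvd_diff)
  qed
qed


section \<open>Non-scalar reductions: parts (ii) and (iii)\<close>

lemma conj_by_invariants:
  fixes p :: int
  assumes p: "prime p" and A: "mred (p^2) A = A" "nonscalar p A" and X: "nonscalar p X"
    and t: "[mtr X = mtr A] (mod p^2)" and d: "[mdet X = mdet A] (mod p^2)"
  shows "conj2 (p^2) A (mred (p^2) X)"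
proof -
  have "msim (p^2) A X" using nonscalar_classification[OF p A(2) X] t d by (simp add: cong_sym)
  then have "msim (p^2) A (mred (p^2) X)" by (rule msim_mcong) simp_all
  then show ?thesis by (rule msim_imp_conj2) simp
qed

lemma nonscalar_unit_entry:
  fixes p :: int
  assumes "prime p"
  shows "nonscalar p (a, 1 + p*x, c, d)"
proof -
  have "\<not> p dvd 1" using prime_gt_1_int[OF assms] by (auto dest: zdvd_imp_le)
  then have "\<not> p dvd 1 + p*x" by (metis dvd_add_left_iff dvd_triv_left)
  then show ?thesis by (simp add: nonscalar_def)
qed

lemma mod_residue:
  fixes p a :: int
  assumes "prime p"
  shows "0 \<le> a mod p" "a mod p < p" "[a mod p = a] (mod p)"
  using prime_gt_1_int[OF assms] by (simp_all add: cong_def)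

lemma GLtwo_invariants:
  fixes p :: int
  assumes p: "prime p" and A: "A \<in> GLtwo p a"
  shows "nonscalar p A \<and> [mtr A = 2*a] (mod p) \<and> [mdet A = a*a] (mod p)"
proof -
  have "[:-a,1:]^2 = [:a*a, -2*a, 1:]" by (simp add: power2_eq_square algebra_simps)
  then have "minpoly_mod p (mred p A) [:(a*a) mod p, (-2*a) mod p, 1:]"
    using A prime_gt_1_int[OF p] by (simp add: GLtwo_def preduce_quad)
  then have "nonscalar p A \<and> [mtr A = -((-2*a) mod p)] (mod p) \<and> [mdet A = (a*a) mod p] (mod p)"
    by (rule minpoly_quadratic[OF p])
  moreover have "[-((-2*a) mod p) = 2*a] (mod p)" "[(a*a) mod p = a*a] (mod p)"
    by (simp_all add: cong_def mod_minus_eq)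
  ultimately show ?thesis by (auto intro: cong_trans)
qed

text \<open>Existence: choose b = a mod p and digits alpha, gamma so that the normal form has the
  trace and determinant of A mod p^2.\<close>

lemma NF2_exists:
  fixes p a :: int
  assumes p: "prime p" and na: "\<not> p dvd a" and A: "A \<in> GLtwo p a"
  shows "\<exists>N\<in>NF2 p a. conj2 (p^2) A N"
proof -
  have AG: "mred (p^2) A = A" using A by (simp add: GLtwo_def GL2_def)
  have nA: "nonscalar p A" and trA: "[mtr A = 2*a] (mod p)" and detA: "[mdet A = a*a] (mod p)"
    using GLtwo_invariants[OF p A] by auto
  define b where "b = a mod p"
  have b: "0 \<le> b" "b < p" "[b = a] (mod p)" using mod_residue[OF p] by (simp_all add: b_def)
  have b0: "b \<noteq> 0" using na by (simp add: b_def dvd_eq_mod_eq_0)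
  have n1: "\<not> p dvd 1" using prime_gt_1_int[OF p] by (auto dest: zdvd_imp_le)
  have "[mtr A = 2*b] (mod p)" using trA b(3) by (metis cong_mult cong_refl cong_sym cong_trans)
  then have "p dvd mtr A - 2*b" by (simp add: cong_iff_dvd_diff)
  then obtain \<alpha> where \<alpha>: "0 \<le> \<alpha>" "\<alpha> < p" "[p*\<alpha> = mtr A - 2*b] (mod p^2)"
    using p_digit[OF p n1] by auto
  have "[mdet A = b*b] (mod p)" using detA b(3) by (metis cong_mult cong_sym cong_trans)
  then have "p dvd (b*b - mdet A) + p*(\<alpha>*b)" by (simp add: cong_iff_dvd_diff dvd_diff_commute)
  then have "p dvd b*b + p*(\<alpha>*b) - mdet A" by (simp add: algebra_simps)
  then obtain \<gamma> where \<gamma>: "0 \<le> \<gamma>" "\<gamma> < p" "[p*\<gamma> = b*b + p*(\<alpha>*b) - mdet A] (mod p^2)"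
    using p_digit[OF p n1] by auto
  define X :: mat2 where "X = (b + p*\<alpha>, 1, p*\<gamma>, b)"
  have "nonscalar p X" using nonscalar_unit_entry[OF p, of _ 0] by (simp add: X_def)
  moreover have "[mtr X = mtr A] (mod p^2)"
    using cong_add[OF cong_refl \<alpha>(3), of "2*b"] by (simp add: X_def mtr_def algebra_simps)
  moreover have "[mdet X = mdet A] (mod p^2)"
    using cong_diff[OF cong_refl \<gamma>(3), of "b*b + p*(\<alpha>*b)"] by (simp add: X_def mdet_def algebra_simps)
  ultimately have "conj2 (p^2) A (mred (p^2) X)" by (rule conj_by_invariants[OF p AG nA])
  moreover have "mred (p^2) X \<in> NF2 p a"
    unfolding NF2_def X_def mem_Collect_eq using b b0 \<alpha> \<gamma>
    by (intro exI[of _ b] exI[of _ \<alpha>] exI[of _ \<gamma>]) simp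
  ultimately show ?thesis by blast
qed

text \<open>Uniqueness: b, alpha and gamma are read off from trace and determinant mod p^2.\<close>

lemma NF2_unique:
  fixes p a :: int
  assumes p: "prime p" and N1: "N1 \<in> NF2 p a" and N2: "N2 \<in> NF2 p a" and s: "msim (p^2) N1 N2"
  shows "N1 = N2"
proof -
  obtain b1 \<alpha>1 \<gamma>1 where
    r1: "0 < b1" "b1 < p" "[b1 = a] (mod p)" "0 \<le> \<alpha>1" "\<alpha>1 < p" "0 \<le> \<gamma>1" "\<gamma>1 < p"
    and N1: "N1 = mred (p^2) (b1 + p*\<alpha>1, 1, p*\<gamma>1, b1)"
    using N1 unfolding NF2_def by blast
  obtain b2 \<alpha>2 \<gamma>2 where
    r2: "0 < b2" "b2 < p" "[b2 = a] (mod p)" "0 \<le> \<alpha>2" "\<alpha>2 < p" "0 \<le> \<gamma>2" "\<gamma>2 < p"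
    and N2: "N2 = mred (p^2) (b2 + p*\<alpha>2, 1, p*\<gamma>2, b2)"
    using N2 unfolding NF2_def by blast
  have p0: "p \<noteq> 0" using p by auto
  have b: "b1 = b2" using r1 r2 by (intro cong_range_eq[of _ _ p]) (auto intro: cong_trans cong_sym)
  have s': "msim (p^2) (b1 + p*\<alpha>1, 1, p*\<gamma>1, b1) (b2 + p*\<alpha>2, 1, p*\<gamma>2, b2)"
    using msim_mcong[OF s] N1 N2 by simp
  have "[p*\<alpha>1 = p*\<alpha>2] (mod p^2)"
    using msim_invariants(1)[OF s'] b by (simp add: mtr_def cong_iff_dvd_diff algebra_simps)
  then have \<alpha>: "\<alpha>1 = \<alpha>2" using r1 r2 cong_scale_p[OF p0] cong_range_eq by blast
  have "[p*\<gamma>2 = p*\<gamma>1] (mod p^2)"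
    using msim_invariants(2)[OF s'] \<alpha> b by (simp add: mdet_def cong_iff_dvd_diff algebra_simps)
  then have "\<gamma>2 = \<gamma>1" using r1 r2 cong_scale_p[OF p0] cong_range_eq by blast
  then show "N1 = N2" using N1 N2 \<alpha> b by simp
qed


text \<open>An irreducible quadratic is prime to X, so its constant term is a unit mod p.\<close>

lemma irreducible_mod_const_coeff:
  fixes p :: int
  assumes p: "prime p" and irr: "irreducible_mod p [:a0,a1,1:]"
  shows "\<not> p dvd a0"
  using irreducible_mod_no_root[OF p irr, of 0] by simp

text \<open>If the minimal polynomial of A mod p is a power of the irreducible f = X^2 + a1 X + a0,
  it is f itself, so A is non-scalar mod p with trace -a1 and determinant a0 mod p.\<close>

lemma GLf_invariants:
  fixes p :: int
  assumes p: "prime p" and A: "A \<in> GLf p [:a0,a1,1:]"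
  shows "nonscalar p A \<and> [mtr A = -a1] (mod p) \<and> [mdet A = a0] (mod p)"
proof -
  obtain k where mp: "minpoly_mod p (mred p A) (preduce p ([:a0,a1,1:]^k))"
    using A unfolding GLf_def by blast
  then have "k = 1" using minpoly_power_quadratic[OF p] by simp
  then have "minpoly_mod p (mred p A) [:a0 mod p, a1 mod p, 1:]"
    using mp prime_gt_1_int[OF p] by (simp add: preduce_quad)
  then have "nonscalar p A \<and> [mtr A = -(a1 mod p)] (mod p) \<and> [mdet A = a0 mod p] (mod p)"
    by (rule minpoly_quadratic[OF p])
  moreover have "[-(a1 mod p) = -a1] (mod p)" "[a0 mod p = a0] (mod p)"
    by (simp_all add: cong_def mod_minus_eq)
  ultimately show ?thesis by (auto intro: cong_trans)
qed

text \<open>Existence: the digits alpha and beta adjust trace and determinant mod p^2; beta enters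
  the determinant multiplied by the unit b0.\<close>

lemma NF3_exists:
  fixes p :: int
  assumes p: "prime p" and irr: "irreducible_mod p [:a0,a1,1:]" and A: "A \<in> GLf p [:a0,a1,1:]"
  shows "\<exists>N\<in>NF3 p a0 a1. conj2 (p^2) A N"
proof -
  have AG: "mred (p^2) A = A" using A by (simp add: GLf_def GL2_def)
  have nA: "nonscalar p A" and trA: "[mtr A = -a1] (mod p)" and detA: "[mdet A = a0] (mod p)"
    using GLf_invariants[OF p A] by auto
  define b0 b1 where "b0 = a0 mod p" "b1 = a1 mod p"
  have b: "0 \<le> b0" "b0 < p" "[b0 = a0] (mod p)" "0 \<le> b1" "b1 < p" "[b1 = a1] (mod p)"
    using mod_residue[OF p] by (simp_all add: b0_b1_def)
  have n1: "\<not> p dvd 1" using prime_gt_1_int[OF p] by (auto dest: zdvd_imp_le)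
  have nb0: "\<not> p dvd b0"
    using irreducible_mod_const_coeff[OF p irr] by (simp add: b0_b1_def dvd_mod_iff)
  have "[mtr A = -b1] (mod p)" using trA b(6) by (metis cong_minus_minus_iff cong_sym cong_trans)
  then have "p dvd mtr A + b1" by (simp add: cong_iff_dvd_diff)
  then obtain \<alpha> where \<alpha>: "0 \<le> \<alpha>" "\<alpha> < p" "[p*\<alpha> = mtr A + b1] (mod p^2)"
    using p_digit[OF p n1] by auto
  have "[mdet A = b0] (mod p)" using detA b(3) by (metis cong_sym cong_trans)
  then have "p dvd (mdet A - b0) + p*(\<alpha>*b1)" by (simp add: cong_iff_dvd_diff)
  then have "p dvd mdet A - b0 + p*(\<alpha>*b1)" by (simp add: algebra_simps)
  then obtain \<beta> where \<beta>: "0 \<le> \<beta>" "\<beta> < p" "[p*(\<beta>*b0) = mdet A - b0 + p*(\<alpha>*b1)] (mod p^2)"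
    using p_digit[OF p nb0] by blast
  define X :: mat2 where "X = (p*\<alpha>, 1 + p*\<beta>, - b0, - b1)"
  have "nonscalar p X" using nonscalar_unit_entry[OF p] by (simp add: X_def)
  moreover have "[mtr X = mtr A] (mod p^2)"
    using cong_diff[OF \<alpha>(3) cong_refl, of b1] by (simp add: X_def mtr_def)
  moreover have "[mdet X = mdet A] (mod p^2)"
    using cong_diff[OF cong_add[OF cong_refl \<beta>(3)] cong_refl, of b0 "p*(\<alpha>*b1)"]
    by (simp add: X_def mdet_def algebra_simps)
  ultimately have "conj2 (p^2) A (mred (p^2) X)" by (rule conj_by_invariants[OF p AG nA])
  moreover have "mred (p^2) X \<in> NF3 p a0 a1"
    unfolding NF3_def X_def mem_Collect_eq using b \<alpha> \<beta>
    by (intro exI[of _ b0] exI[of _ b1] exI[of _ \<alpha>] exI[of _ \<beta>]) simp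
  ultimately show ?thesis by blast
qed

text \<open>Uniqueness: b0, b1, alpha and beta are read off from trace and determinant mod p^2.\<close>

lemma NF3_unique:
  fixes p :: int
  assumes p: "prime p" and irr: "irreducible_mod p [:a0,a1,1:]"
    and N1: "N1 \<in> NF3 p a0 a1" and N2: "N2 \<in> NF3 p a0 a1" and s: "msim (p^2) N1 N2"
  shows "N1 = N2"
proof -
  obtain c0 c1 \<alpha>1 \<beta>1 where
    r1: "0 \<le> c0" "c0 < p" "0 \<le> c1" "c1 < p" "[c0 = a0] (mod p)" "[c1 = a1] (mod p)"
      "0 \<le> \<alpha>1" "\<alpha>1 < p" "0 \<le> \<beta>1" "\<beta>1 < p"
    and N1: "N1 = mred (p^2) (p*\<alpha>1, 1 + p*\<beta>1, - c0, - c1)"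
    using N1 unfolding NF3_def by blast
  obtain d0 d1 \<alpha>2 \<beta>2 where
    r2: "0 \<le> d0" "d0 < p" "0 \<le> d1" "d1 < p" "[d0 = a0] (mod p)" "[d1 = a1] (mod p)"
      "0 \<le> \<alpha>2" "\<alpha>2 < p" "0 \<le> \<beta>2" "\<beta>2 < p"
    and N2: "N2 = mred (p^2) (p*\<alpha>2, 1 + p*\<beta>2, - d0, - d1)"
    using N2 unfolding NF3_def by blast
  have p0: "p \<noteq> 0" using p by auto
  have e0: "c0 = d0" and e1: "c1 = d1"
    using r1 r2 by (auto intro: cong_range_eq[of _ _ p] cong_trans cong_sym)
  have "\<not> p dvd c0" using irreducible_mod_const_coeff[OF p irr] r1(5) by (metis cong_dvd_iff)
  then have cp: "coprime c0 p" using prime_imp_coprime[OF p] by (simp add: coprime_commute)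
  have s': "msim (p^2) (p*\<alpha>1, 1 + p*\<beta>1, - c0, - c1) (p*\<alpha>2, 1 + p*\<beta>2, - d0, - d1)"
    using msim_mcong[OF s] N1 N2 by simp
  have "[p*\<alpha>1 = p*\<alpha>2] (mod p^2)"
    using msim_invariants(1)[OF s'] e1 by (simp add: mtr_def cong_iff_dvd_diff algebra_simps)
  then have \<alpha>: "\<alpha>1 = \<alpha>2" using r1 r2 cong_scale_p[OF p0] cong_range_eq by blast
  have "[p*(\<beta>1*c0) = p*(\<beta>2*c0)] (mod p^2)"
    using msim_invariants(2)[OF s'] \<alpha> e0 e1 by (simp add: mdet_def cong_iff_dvd_diff algebra_simps)
  then have "[\<beta>1 = \<beta>2] (mod p)" using cong_scale_p[OF p0] cong_mult_rcancel[OF cp] by blast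
  then have "\<beta>1 = \<beta>2" using r1 r2 cong_range_eq by blast
  then show "N1 = N2" using N1 N2 \<alpha> e0 e1 by simp
qed


section \<open>Scalar reductions: part (i)\<close>

text \<open>The normal forms of part (i) are exactly the matrices bI + pD with D a canonical form
  mod p; the next two lemmas give the two inclusions.\<close>

lemma NF1_near_scalar:
  assumes "N \<in> NF1 p a"
  shows "\<exists>b D. 0 < b \<and> b < p \<and> [b = a] (mod p) \<and> canonical_form p D \<and>
      N = mred (p^2) (near_scalar p b D)"
proof -
  consider
      (diag) b \<alpha> \<delta> where "0 < b" "b < p" "[b = a] (mod p)" "0 \<le> \<alpha>" "\<alpha> \<le> \<delta>" "\<delta> < p"
        "N = mred (p^2) (b + p*\<alpha>, 0, 0, b + p*\<delta>)"
    | (jordan) b \<alpha> where "0 < b" "b < p" "[b = a] (mod p)" "0 \<le> \<alpha>" "\<alpha> < p"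
        "N = mred (p^2) (b + p*\<alpha>, p, 0, b + p*\<alpha>)"
    | (irreducible) b b0 b1 where "0 < b" "b < p" "[b = a] (mod p)" "0 \<le> b0" "b0 < p" "0 \<le> b1"
        "b1 < p" "irreducible_mod p [:b0, b1, 1:]" "N = mred (p^2) (b, p, - p*b0, b - p*b1)"
    using assms unfolding NF1_def by blast
  then show ?thesis
  proof cases
    case diag
    then show ?thesis unfolding canonical_form_def diag_form_def
      by (intro exI[of _ b] exI[of _ "(\<alpha>,0,0,\<delta>)"]) (auto simp: near_scalar_eq)
  next
    case jordan
    then show ?thesis unfolding canonical_form_def jordan_form_def
      by (intro exI[of _ b] exI[of _ "(\<alpha>,1,0,\<alpha>)"]) (auto simp: near_scalar_eq)
  next
    case irreducible
    then show ?thesis unfolding canonical_form_def irreducible_form_def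
      by (intro exI[of _ b] exI[of _ "(0,1,-b0,-b1)"]) (auto simp: near_scalar_eq)
  qed
qed

lemma near_scalar_NF1:
  assumes b: "0 < b" "b < p" "[b = a] (mod p)" and D: "canonical_form p D"
  shows "mred (p^2) (near_scalar p b D) \<in> NF1 p a"
  using D unfolding canonical_form_def
proof (elim disjE)
  assume "diag_form p D"
  then obtain \<alpha> \<delta> where "0 \<le> \<alpha>" "\<alpha> \<le> \<delta>" "\<delta> < p" "D = (\<alpha>,0,0,\<delta>)"
    unfolding diag_form_def by blast
  then show ?thesis unfolding NF1_def using b by (intro UnI1 CollectI) (auto simp: near_scalar_eq)
next
  assume "jordan_form p D"
  then obtain \<alpha> where "0 \<le> \<alpha>" "\<alpha> < p" "D = (\<alpha>,1,0,\<alpha>)" unfolding jordan_form_def by blast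
  then show ?thesis unfolding NF1_def using b by (intro UnI1 UnI2 CollectI) (auto simp: near_scalar_eq)
next
  assume "irreducible_form p D"
  then obtain b0 b1 where "0 \<le> b0" "b0 < p" "0 \<le> b1" "b1 < p" "irreducible_mod p [:b0,b1,1:]"
    "D = (0,1,-b0,-b1)" unfolding irreducible_form_def by blast
  then show ?thesis unfolding NF1_def using b by (intro UnI2 CollectI) (auto simp: near_scalar_eq)
qed

lemma GL11_near_scalar:
  assumes "A \<in> GL11 p a"
  shows "\<exists>C. A = near_scalar p (a mod p) C"
proof -
  obtain x1 x2 x3 x4 where A: "A = (x1,x2,x3,x4)" by (cases A)
  have "[x1 = a] (mod p)" "[x2 = 0] (mod p)" "[x3 = 0] (mod p)" "[x4 = a] (mod p)"
    using assms by (simp_all add: GL11_def A mred_def msmul_def mI_def cong_def)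
  moreover have "[a = a mod p] (mod p)" by (simp add: cong_def)
  ultimately have "p dvd x1 - a mod p" "p dvd x2" "p dvd x3" "p dvd x4 - a mod p"
    by (auto simp: cong_iff_dvd_diff [symmetric] cong_0_iff intro: cong_trans)
  then show ?thesis
    by (intro exI[of _ "((x1 - a mod p) div p, x2 div p, x3 div p, (x4 - a mod p) div p)"])
      (simp add: A near_scalar_eq)
qed

text \<open>Existence: write A = bI + pC and replace C by its canonical form mod p.\<close>

lemma NF1_exists:
  fixes p a :: int
  assumes p: "prime p" and na: "\<not> p dvd a" and A: "A \<in> GL11 p a"
  shows "\<exists>N\<in>NF1 p a. conj2 (p^2) A N"
proof -
  define b where "b = a mod p"
  obtain C where AC: "A = near_scalar p b C" using GL11_near_scalar[OF A] by (auto simp: b_def)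
  obtain D where D: "canonical_form p D" and CD: "msim p C D"
    using canonical_form_exists[OF p] by blast
  have "msim (p^2) A (near_scalar p b D)"
    unfolding AC using msim_near_scalar_iff CD p by auto
  then have "msim (p^2) A (mred (p^2) (near_scalar p b D))" by (rule msim_mcong) simp_all
  then have "conj2 (p^2) A (mred (p^2) (near_scalar p b D))" by (rule msim_imp_conj2) simp
  moreover have "0 < b" "b < p" "[b = a] (mod p)"
    using mod_residue[OF p, of a] na by (auto simp: b_def dvd_eq_mod_eq_0 order_le_less)
  then have "mred (p^2) (near_scalar p b D) \<in> NF1 p a" using near_scalar_NF1 D by blast
  ultimately show ?thesis by blast
qed

text \<open>Uniqueness: b is determined by a, and the canonical forms mod p are pairwise
  non-similar.\<close>

lemma NF1_unique:
  fixes p a :: int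
  assumes p: "prime p" and N1: "N1 \<in> NF1 p a" and N2: "N2 \<in> NF1 p a" and s: "msim (p^2) N1 N2"
  shows "N1 = N2"
proof -
  obtain b1 D1 where r1: "0 < b1" "b1 < p" "[b1 = a] (mod p)" "canonical_form p D1"
    and N1: "N1 = mred (p^2) (near_scalar p b1 D1)"
    using NF1_near_scalar[OF N1] by blast
  obtain b2 D2 where r2: "0 < b2" "b2 < p" "[b2 = a] (mod p)" "canonical_form p D2"
    and N2: "N2 = mred (p^2) (near_scalar p b2 D2)"
    using NF1_near_scalar[OF N2] by blast
  have b: "b1 = b2" using r1 r2 by (intro cong_range_eq[of _ _ p]) (auto intro: cong_trans cong_sym)
  have "msim (p^2) (near_scalar p b1 D1) (near_scalar p b1 D2)" using msim_mcong[OF s] N1 N2 b by simp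
  then have "msim p D1 D2" using msim_near_scalar_iff p by auto
  then show "N1 = N2" using canonical_form_unique[OF p r1(4) r2(4)] N1 N2 b by simp
qed

theorem theorem3p2:
  fixes p :: int
  assumes "prime p"
  shows "(\<forall>a. \<not> p dvd a \<longrightarrow> (\<forall>A\<in>GL11 p a. \<exists>!N. N \<in> NF1 p a \<and> conj2 (p^2) A N))
       \<and> (\<forall>a. \<not> p dvd a \<longrightarrow> (\<forall>A\<in>GLtwo p a. \<exists>!N. N \<in> NF2 p a \<and> conj2 (p^2) A N))
       \<and> (\<forall>a0 a1. irreducible_mod p [:a0, a1, 1:] \<longrightarrow>
            (\<forall>A\<in>GLf p [:a0, a1, 1:]. \<exists>!N. N \<in> NF3 p a0 a1 \<and> conj2 (p^2) A N))"
proof (intro conjI allI impI ballI)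
  fix a A assume "\<not> p dvd a" "A \<in> GL11 p a"
  then obtain N where "N \<in> NF1 p a" "conj2 (p^2) A N" using NF1_exists[OF assms] by blast
  then show "\<exists>!N. N \<in> NF1 p a \<and> conj2 (p^2) A N"
    using unique_representative NF1_unique[OF assms] by blast
next
  fix a A assume "\<not> p dvd a" "A \<in> GLtwo p a"
  then obtain N where "N \<in> NF2 p a" "conj2 (p^2) A N" using NF2_exists[OF assms] by blast
  then show "\<exists>!N. N \<in> NF2 p a \<and> conj2 (p^2) A N"
    using unique_representative NF2_unique[OF assms] by blast
next
  fix a0 a1 A assume irr: "irreducible_mod p [:a0, a1, 1:]" and "A \<in> GLf p [:a0, a1, 1:]"
  then obtain N where "N \<in> NF3 p a0 a1" "conj2 (p^2) A N" using NF3_exists[OF assms] by blast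
  then show "\<exists>!N. N \<in> NF3 p a0 a1 \<and> conj2 (p^2) A N"
    using unique_representative NF3_unique[OF assms irr] by blast
qed

end
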